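(* Let $p_1=2,p_2,\ldots$ be the consecutive primes, $\chi$ a Dirichlet character, $r\ge1$ an integer and $n\ge1$. Put $\Lambda_r=A_rL(r+1,\chi)L(r+2,\chi)L(r+3,\chi)$ and, for $k\ge1$, \[P_{r,k}=\left(1+\frac{\chi(p_k)}{p_k(p_k^{r+1}-p_k^r-1)}\right)\left(1-\frac{\chi(p_k)}{p_k^{r+2}}\right)\left(1-\frac{\chi(p_k)}{p_k^{r+3}}\right),\qquad E_{r,n}=\prod_{k\ge n+1}P_{r,k}.\] Then \[B_\chi(r)=E_{r,n}\,\Lambda_r\prod_{k=1}^nP_{r,k},\] and, provided that either $r=1$ and $p_{n+1}\ge5$, or $r=2$ and $p_{n+1}\ge3$, \[1-\frac1{p_{n+1}^{r+2}}\le |E_{r,n}|\le 1+\frac1{p_{n+1}^{r+2}}.\]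
   Context: $B_\chi(r)=\prod_p\left(1+\frac{p(\chi(p)-1)}{(p-1)(p^{r+1}-\chi(p))}\right)$ and $A_r=\prod_p\left(1-\frac{1}{p^r(p-1)}\right)$, products over rational primes; $L(s,\chi)=\sum_{n\ge1}\chi(n)n^{-s}=\prod_p(1-\chi(p)p^{-s})^{-1}$ for $\mathrm{Re}(s)>1$. *)

theory Defs
  imports "HOL-Analysis.Analysis" "HOL-Computational_Algebra.Primes"
begin

definition dirichlet_character :: "nat \<Rightarrow> (nat \<Rightarrow> complex) \<Rightarrow> bool" where
  "dirichlet_character q chi \<longleftrightarrow> q > 0 \<and>
     (\<forall>m n. chi (m * n) = chi m * chi n) \<and>
     (\<forall>n. chi (n + q) = chi n) \<and>
     (\<forall>n. chi n \<noteq> 0 \<longleftrightarrow> coprime n q)"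

text \<open>The k-th prime, 1-indexed: nth_prime 1 = 2, nth_prime 2 = 3, ...\<close>
definition nth_prime :: "nat \<Rightarrow> nat" where
  "nth_prime k = enumerate {p::nat. prime p} (k - 1)"

definition prod_primes :: "(nat \<Rightarrow> 'a::{t2_space, comm_semiring_1}) \<Rightarrow> 'a" where
  "prod_primes f = prodinf (\<lambda>k. f (nth_prime (k + 1)))"

definition dirichlet_L :: "real \<Rightarrow> (nat \<Rightarrow> complex) \<Rightarrow> complex" where
  "dirichlet_L s chi = (\<Sum>n. chi (n + 1) / of_real (real (n + 1) powr s))"

definition B_chi :: "(nat \<Rightarrow> complex) \<Rightarrow> nat \<Rightarrow> complex" where
  "B_chi chi r = prod_primes (\<lambda>p. 1 + of_nat p * (chi p - 1) /
      ((of_nat p - 1) * (of_nat p ^ (r + 1) - chi p)))"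

definition A_const :: "nat \<Rightarrow> real" where
  "A_const r = prod_primes (\<lambda>p. 1 - 1 / (real p ^ r * (real p - 1)))"

definition P_factor :: "(nat \<Rightarrow> complex) \<Rightarrow> nat \<Rightarrow> nat \<Rightarrow> complex" where
  "P_factor chi r k = (let p = nth_prime k in
     (1 + chi p / (of_nat p * (of_nat p ^ (r + 1) - of_nat p ^ r - 1))) *
     (1 - chi p / of_nat p ^ (r + 2)) *
     (1 - chi p / of_nat p ^ (r + 3)))"

definition E_tail :: "(nat \<Rightarrow> complex) \<Rightarrow> nat \<Rightarrow> nat \<Rightarrow> complex" where
  "E_tail chi r n = prodinf (\<lambda>j. P_factor chi r (n + 1 + j))"

definition Lambda_const :: "(nat \<Rightarrow> complex) \<Rightarrow> nat \<Rightarrow> complex" where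
  "Lambda_const chi r = of_real (A_const r) * dirichlet_L (real r + 1) chi *
     dirichlet_L (real r + 2) chi * dirichlet_L (real r + 3) chi"

end

theory Submission
  imports Defs
begin

text \<open>For an integer s >= 2, sieving the absolutely convergent series L(s, chi) by the first N
  primes leaves L(s, chi) prod_{k<N} (1 - chi(p_k) p_k^-s), the sum over the integers free of these
  primes, which tends to 1: this is the Euler product. A rational identity splits the local factor
  of B_chi(r) at p into the local factor of A_r, the factor P at p, and the Euler factors of
  L(r+1, chi), L(r+2, chi), L(r+3, chi); all these products converge, so
  B_chi(r) = Lambda_r prod_k P_{r,k}, and splitting off the first n factors gives the identity.

  For the bounds, expanding P_{r,k} gives |P_{r,k} - 1| <= p_k^-(r+3) under the hypotheses on r and
  p_{n+1}, and p^-(r+3) <= g(p) - g(p+1) for g(p) = 1/(2 p^(r+2)), so the errors for k > n sum to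
  S <= p_{n+1}^-(r+2) / 2. Hence 1 - S <= |E_{r,n}| <= exp S <= 1 + 2S.\<close>

lemma infinite_primes [simp]: "infinite {p::nat. prime p}"
  using primes_infinite .

abbreviation prime_enum :: "nat \<Rightarrow> nat" where
  "prime_enum \<equiv> enumerate {p. prime p}"

lemma nth_prime_Suc: "nth_prime (Suc k) = prime_enum k"
  unfolding nth_prime_def by simp

lemma prime_prime_enum: "prime (prime_enum k)"
  using enumerate_in_set[OF infinite_primes] by simp

lemma prime_enum_ge: "k + 2 \<le> prime_enum k"
proof (induction k)
  case 0
  show ?case using prime_ge_2_nat[OF prime_prime_enum[of 0]] by simp
next
  case (Suc k)
  then show ?case using enumerate_step[OF infinite_primes, of k] by linarith
qed

lemma two_le_prime_enum: "2 \<le> prime_enum k"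
  using prime_enum_ge[of k] by simp

lemma prime_enum_surj: "prime p \<Longrightarrow> \<exists>k. prime_enum k = p"
  using enumerate_Ex[OF infinite_primes] by simp

lemma prime_enum_inj: "prime_enum j = prime_enum k \<longleftrightarrow> j = k"
  by (simp add: order.eq_iff)

lemma dirichlet_character_mult:
  "dirichlet_character q chi \<Longrightarrow> chi (m * n) = chi m * chi n"
  unfolding dirichlet_character_def by blast

lemma dirichlet_character_1: "dirichlet_character q chi \<Longrightarrow> chi 1 = 1"
proof -
  assume chi: "dirichlet_character q chi"
  have "chi 1 \<noteq> 0" using chi unfolding dirichlet_character_def by auto
  moreover have "chi 1 = chi 1 * chi 1" using dirichlet_character_mult[OF chi, of 1 1] by simp
  ultimately show ?thesis by simp
qed

lemma dirichlet_character_mod: "dirichlet_character q chi \<Longrightarrow> chi n = chi (n mod q)"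
proof -
  assume chi: "dirichlet_character q chi"
  have periodic: "chi (a + k * q) = chi a" for a k
  proof (induction k)
    case (Suc k)
    have "chi (a + Suc k * q) = chi ((a + k * q) + q)" by (simp add: algebra_simps)
    also have "\<dots> = chi (a + k * q)" using chi unfolding dirichlet_character_def by blast
    finally show ?case using Suc by simp
  qed simp
  show ?thesis using periodic[of "n mod q" "n div q"] by simp
qed

text \<open>The values are bounded by periodicity, and a value of modulus \<open>> 1\<close> would have unbounded powers.\<close>
lemma norm_dirichlet_character_le_1:
  assumes chi: "dirichlet_character q chi"
  shows "norm (chi n) \<le> 1"
proof (rule ccontr)
  assume "\<not> norm (chi n) \<le> 1"
  hence gt: "norm (chi n) > 1" by simp
  have q: "q > 0" using chi unfolding dirichlet_character_def by auto
  define M where "M = Max ((\<lambda>a. norm (chi a)) ` {..<q})"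
  have bounded: "norm (chi a) \<le> M" for a
  proof -
    have "norm (chi a) = norm (chi (a mod q))" using dirichlet_character_mod[OF chi] by metis
    also have "\<dots> \<le> M" unfolding M_def using q by (intro Max_ge) auto
    finally show ?thesis .
  qed
  have power: "chi (n ^ k) = chi n ^ k" for k
  proof (induction k)
    case 0
    show ?case using dirichlet_character_1[OF chi] by (metis power_0)
  qed (simp add: dirichlet_character_mult[OF chi])
  obtain k where "norm (chi n) ^ k > M" using real_arch_pow[OF gt] by blast
  moreover have "norm (chi n) ^ k \<le> M" using bounded[of "n ^ k"] by (simp add: power norm_power)
  ultimately show False by simp
qed

section \<open>Euler products\<close>

definition sifted :: "nat \<Rightarrow> nat set" where
  "sifted N = {n. 0 < n \<and> (\<forall>k<N. \<not> prime_enum k dvd n)}"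

lemma sifted_0: "sifted 0 = UNIV - {0}"
  unfolding sifted_def by auto

lemma one_in_sifted: "1 \<in> sifted N"
proof -
  have "\<not> prime_enum k dvd 1" for k
    using prime_prime_enum not_prime_1 nat_dvd_1_iff_1 by metis
  thus ?thesis unfolding sifted_def by simp
qed

lemma image_mult_sifted:
  "(\<lambda>a. prime_enum N * a) ` sifted N = {n \<in> sifted N. prime_enum N dvd n}"
proof safe
  fix a assume a: "a \<in> sifted N"
  show "prime_enum N * a \<in> sifted N" unfolding sifted_def
  proof safe
    show "0 < prime_enum N * a"
      using a prime_gt_0_nat[OF prime_prime_enum] unfolding sifted_def by auto
    fix k assume k: "k < N" and dvd: "prime_enum k dvd prime_enum N * a"
    have "prime_enum k \<noteq> prime_enum N" using k prime_enum_inj by simp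
    hence "\<not> prime_enum k dvd prime_enum N"
      using primes_dvd_imp_eq prime_prime_enum by blast
    with dvd have "prime_enum k dvd a" by (simp add: prime_dvd_mult_iff prime_prime_enum)
    with a k show False unfolding sifted_def by auto
  qed
next
  fix n assume n: "n \<in> sifted N" "prime_enum N dvd n"
  then obtain a where a: "n = prime_enum N * a" by blast
  have "a \<in> sifted N" using n unfolding a sifted_def by (auto intro: gr0I)
  thus "n \<in> (\<lambda>a. prime_enum N * a) ` sifted N" using a by blast
qed simp

lemma sifted_Suc: "sifted (Suc N) = sifted N - (\<lambda>a. prime_enum N * a) ` sifted N"
  unfolding image_mult_sifted by (auto simp: sifted_def less_Suc_eq)

text \<open>A sifted number other than 1 has a prime factor \<open>prime_enum k \<ge> k + 2\<close> with \<open>k \<ge> N\<close>.\<close>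
lemma sifted_minus_1_subset: "sifted N - {1} \<subseteq> {N<..}"
proof
  fix n assume n: "n \<in> sifted N - {1}"
  then obtain p where p: "prime p" "p dvd n" using prime_factor_nat by blast
  obtain k where k: "prime_enum k = p" using prime_enum_surj[OF p(1)] by blast
  have "N \<le> k" using n p k unfolding sifted_def by (auto simp: not_less[symmetric])
  moreover have "p \<le> n" using p n dvd_imp_le unfolding sifted_def by auto
  ultimately show "n \<in> {N<..}" using prime_enum_ge[of k] k by simp
qed

lemma infsum_greaterThan_tendsto_0:
  fixes g :: "nat \<Rightarrow> real"
  assumes "summable g" and "\<And>n. 0 \<le> g n"
  shows "(\<lambda>N. infsum g {N<..}) \<longlonglongrightarrow> 0"
proof -
  have has_sum: "(g has_sum suminf g) UNIV"
    using assms by (intro norm_summable_imp_has_sum) (simp_all add: summable_sums)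
  have "infsum g {N<..} = suminf g - sum g {..N}" for N
  proof -
    have "{N<..} = UNIV - {..N}" by auto
    thus ?thesis using infsum_Diff[of g UNIV "{..N}"] has_sum infsumI[OF has_sum]
      by (auto simp: has_sum_iff)
  qed
  moreover have "(\<lambda>N. suminf g - sum g {..N}) \<longlonglongrightarrow> suminf g - suminf g"
    by (intro tendsto_diff tendsto_const summable_LIMSEQ' assms(1))
  ultimately show ?thesis by simp
qed

context
  fixes f :: "nat \<Rightarrow> 'a :: {real_normed_field, banach}"
  assumes mult: "\<And>m n. f (m * n) = f m * f n"
    and f_1: "f 1 = 1"
    and abs_summable: "summable (\<lambda>n. norm (f n))"
begin

lemma multiplicative_summable_on: "f summable_on A"
  using norm_summable_imp_summable_on[OF abs_summable] summable_on_subset_banach by blast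

lemma multiplicative_abs_summable_on: "(\<lambda>n. norm (f n)) summable_on A"
  using norm_summable_imp_summable_on[of "\<lambda>n. norm (f n)"] abs_summable
    summable_on_subset_banach by fastforce

lemma infsum_sifted_0: "infsum f (sifted 0) = (\<Sum>n. f (Suc n))"
proof -
  have "(f has_sum suminf f) UNIV"
    using abs_summable by (intro norm_summable_imp_has_sum) (simp_all add: summable_norm_cancel summable_sums)
  hence "infsum f (sifted 0) = suminf f - f 0"
    unfolding sifted_0 using infsum_Diff[of f UNIV "{0}"] multiplicative_summable_on
    by (simp add: infsumI)
  also have "\<dots> = (\<Sum>n. f (Suc n))"
    using suminf_split_head[OF summable_norm_cancel[OF abs_summable]] by simp
  finally show ?thesis .
qed

lemma infsum_sifted_Suc:
  "infsum f (sifted (Suc N)) = infsum f (sifted N) * (1 - f (prime_enum N))"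
proof -
  let ?p = "prime_enum N"
  have "(\<lambda>a. ?p * a) ` sifted N \<subseteq> sifted N" using image_mult_sifted by blast
  hence "infsum f (sifted (Suc N)) = infsum f (sifted N) - infsum f ((\<lambda>a. ?p * a) ` sifted N)"
    unfolding sifted_Suc by (intro infsum_Diff multiplicative_summable_on)
  also have "inj_on (\<lambda>a. ?p * a) (sifted N)"
    using prime_gt_0_nat[OF prime_prime_enum, of N] by (auto simp: inj_on_def)
  hence "infsum f ((\<lambda>a. ?p * a) ` sifted N) = infsum (\<lambda>a. f ?p * f a) (sifted N)"
    by (simp add: infsum_reindex o_def mult)
  also have "\<dots> = f ?p * infsum f (sifted N)"
    by (intro infsum_cmult_right multiplicative_summable_on)
  finally show ?thesis by (simp add: algebra_simps)
qed

lemma infsum_sifted: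
  "infsum f (sifted N) = (\<Sum>n. f (Suc n)) * (\<Prod>k<N. 1 - f (prime_enum k))"
  by (induction N) (simp_all add: infsum_sifted_0 infsum_sifted_Suc)

lemma infsum_sifted_tendsto_1: "(\<lambda>N. infsum f (sifted N)) \<longlonglongrightarrow> 1"
proof -
  have bound: "norm (infsum f (sifted N) - 1) \<le> infsum (\<lambda>n. norm (f n)) {N<..}" for N
  proof -
    have "infsum f (sifted N) = infsum f (insert 1 (sifted N - {1}))"
      using one_in_sifted by (simp add: insert_absorb)
    also have "\<dots> = 1 + infsum f (sifted N - {1})"
      by (subst infsum_insert) (use f_1 in \<open>simp_all add: multiplicative_summable_on\<close>)
    finally have "infsum f (sifted N) - 1 = infsum f (sifted N - {1})" by simp
    also have "norm \<dots> \<le> infsum (\<lambda>n. norm (f n)) (sifted N - {1})"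
      by (intro norm_infsum_le[OF has_sum_infsum has_sum_infsum] multiplicative_summable_on
          multiplicative_abs_summable_on) simp
    also have "\<dots> \<le> infsum (\<lambda>n. norm (f n)) {N<..}"
      by (intro infsum_mono2 sifted_minus_1_subset multiplicative_abs_summable_on) simp
    finally show ?thesis .
  qed
  have "(\<lambda>N. infsum f (sifted N) - 1) \<longlonglongrightarrow> 0"
    by (rule tendsto_norm_zero_cancel, rule Lim_null_comparison[OF _ infsum_greaterThan_tendsto_0])
       (use bound abs_summable in auto)
  thus ?thesis by (simp add: LIM_zero_iff)
qed

theorem euler_product:
  "(\<lambda>k. inverse (1 - f (prime_enum k))) has_prod (\<Sum>n. f (Suc n))"
proof -
  let ?L = "\<Sum>n. f (Suc n)"
  let ?P = "\<lambda>N. \<Prod>k<N. 1 - f (prime_enum k)"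
  have lim: "(\<lambda>N. ?L * ?P N) \<longlonglongrightarrow> 1"
    using infsum_sifted_tendsto_1 by (simp add: infsum_sifted)
  have L: "?L \<noteq> 0"
  proof
    assume "?L = 0"
    with lim have "(\<lambda>N. 0::'a) \<longlonglongrightarrow> 1" by simp
    thus False using LIMSEQ_unique[OF _ tendsto_const] by fastforce
  qed
  have "(\<lambda>N. ?L * inverse (?L * ?P N)) \<longlonglongrightarrow> ?L * inverse 1"
    by (intro tendsto_mult tendsto_const tendsto_inverse lim) simp
  moreover have "?L * inverse (?L * ?P N) = (\<Prod>k<N. inverse (1 - f (prime_enum k)))" for N
    using L by (simp add: prod_inversef[symmetric])
  ultimately have "(\<lambda>N. \<Prod>k<N. inverse (1 - f (prime_enum k))) \<longlonglongrightarrow> ?L" by simp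
  hence "(\<lambda>N. \<Prod>k\<le>N. inverse (1 - f (prime_enum k))) \<longlonglongrightarrow> ?L"
    using LIMSEQ_Suc by (fastforce simp: lessThan_Suc_atMost)
  thus ?thesis using L unfolding has_prod_def raw_has_prod_def by simp
qed

end

lemma dirichlet_L_euler_product:
  assumes chi: "dirichlet_character q chi" and m: "2 \<le> m"
  shows "(\<lambda>k. inverse (1 - chi (prime_enum k) / of_nat (prime_enum k) ^ m))
           has_prod dirichlet_L (real m) chi"
proof -
  define f where "f n = chi n / of_nat n ^ m" for n
  have "summable (\<lambda>n. norm (f n))"
  proof (rule summable_comparison_test)
    show "summable (\<lambda>n. inverse (real n ^ m))" using inverse_power_summable[OF m] by simp
    have "norm (f n) \<le> inverse (real n ^ m)" for n
    proof -
      have "norm (f n) = norm (chi n) / real n ^ m" by (simp add: f_def norm_divide norm_power)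
      also have "\<dots> \<le> 1 / real n ^ m"
        by (intro divide_right_mono norm_dirichlet_character_le_1[OF chi]) simp
      finally show ?thesis by (simp add: divide_inverse)
    qed
    thus "\<exists>N. \<forall>n\<ge>N. norm (norm (f n)) \<le> inverse (real n ^ m)" by simp
  qed
  moreover have "f (a * b) = f a * f b" for a b
    by (simp add: f_def dirichlet_character_mult[OF chi] power_mult_distrib)
  moreover have "f 1 = 1" using dirichlet_character_1[OF chi] by (simp add: f_def)
  ultimately have "(\<lambda>k. inverse (1 - f (prime_enum k))) has_prod (\<Sum>n. f (Suc n))"
    by (intro euler_product)
  moreover have "dirichlet_L (real m) chi = (\<Sum>n. f (Suc n))"
    unfolding dirichlet_L_def f_def by (simp add: powr_realpow del: of_nat_Suc)
  ultimately show ?thesis by (simp add: f_def)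
qed

lemma summable_inverse_square_prime_enum: "summable (\<lambda>k. 1 / real (prime_enum k) ^ 2)"
proof (rule summable_comparison_test)
  have "summable (\<lambda>n. inverse (real n ^ 2))"
    using inverse_power_summable[of 2, where 'a=real] by simp
  thus "summable (\<lambda>k. inverse (real (Suc k) ^ 2))"
    using summable_ignore_initial_segment[of _ 1] by fastforce
  have "real (Suc k) ^ 2 \<le> real (prime_enum k) ^ 2" for k
    using prime_enum_ge[of k] by (intro power_mono) auto
  thus "\<exists>N. \<forall>k\<ge>N. norm (1 / real (prime_enum k) ^ 2) \<le> inverse (real (Suc k) ^ 2)"
    by (auto simp: divide_inverse simp del: of_nat_Suc intro!: le_imp_inverse_le)
qed

lemma convergent_prod_over_primes:
  fixes g :: "nat \<Rightarrow> 'a :: {real_normed_field, banach}"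
  assumes "\<And>p. prime p \<Longrightarrow> norm (g p - 1) \<le> C / real p ^ 2"
  shows "convergent_prod (\<lambda>k. g (prime_enum k))"
proof (intro abs_convergent_prod_imp_convergent_prod summable_imp_abs_convergent_prod)
  show "summable (\<lambda>k. norm (g (prime_enum k) - 1))"
  proof (rule summable_comparison_test)
    show "summable (\<lambda>k. C * (1 / real (prime_enum k) ^ 2))"
      by (intro summable_mult summable_inverse_square_prime_enum)
    show "\<exists>N. \<forall>k\<ge>N. norm (norm (g (prime_enum k) - 1)) \<le> C * (1 / real (prime_enum k) ^ 2)"
      using assms[OF prime_prime_enum] by simp
  qed
qed

section \<open>The factorisation of B_chi\<close>

definition A_euler_factor :: "nat \<Rightarrow> nat \<Rightarrow> real" where
  "A_euler_factor r p = 1 - 1 / (real p ^ r * (real p - 1))"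

definition B_euler_factor :: "(nat \<Rightarrow> complex) \<Rightarrow> nat \<Rightarrow> nat \<Rightarrow> complex" where
  "B_euler_factor chi r p =
     1 + of_nat p * (chi p - 1) / ((of_nat p - 1) * (of_nat p ^ (r + 1) - chi p))"

definition P_euler_factor :: "(nat \<Rightarrow> complex) \<Rightarrow> nat \<Rightarrow> nat \<Rightarrow> complex" where
  "P_euler_factor chi r p =
     (1 + chi p / (of_nat p * (of_nat p ^ (r + 1) - of_nat p ^ r - 1))) *
     (1 - chi p / of_nat p ^ (r + 2)) * (1 - chi p / of_nat p ^ (r + 3))"

lemma A_const_eq_prodinf: "A_const r = (\<Prod>k. A_euler_factor r (prime_enum k))"
  unfolding A_const_def prod_primes_def A_euler_factor_def by (simp add: nth_prime_Suc)

lemma B_chi_eq_prodinf: "B_chi chi r = (\<Prod>k. B_euler_factor chi r (prime_enum k))"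
  unfolding B_chi_def prod_primes_def B_euler_factor_def by (simp add: nth_prime_Suc)

lemma P_factor_eq_P_euler_factor: "P_factor chi r k = P_euler_factor chi r (nth_prime k)"
  unfolding P_factor_def P_euler_factor_def by (simp add: Let_def)

text \<open>With P = p, Q = p^r, x = chi(p): the local factor of B_chi(r) is the local factor of A_r,
  times the first factor of P_euler_factor, times the Euler factor of L(r+1, chi).\<close>
lemma euler_factor_identity:
  fixes P Q D x :: "'a :: field"
  assumes P1: "P \<noteq> 1" and P: "P \<noteq> 0" and Q: "Q \<noteq> 0" and x: "P * Q \<noteq> x" and D: "D \<noteq> 0"
    and D_def: "D = P * Q - Q - 1"
  shows "1 + P * (x - 1) / ((P - 1) * (P * Q - x))
           = (1 - 1 / (Q * (P - 1))) * (1 + x / (P * D)) / (1 - x / (P * Q))"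
proof -
  have nz: "P - 1 \<noteq> 0" "P * Q - x \<noteq> 0" using P1 x by simp_all
  have "1 + P * (x - 1) / ((P - 1) * (P * Q - x)) = (P * D + x) / ((P - 1) * (P * Q - x))"
    by (subst add_divide_eq_iff) (use nz in simp, simp add: D_def algebra_simps)
  also have "\<dots> = (D / (Q * (P - 1))) * ((P * D + x) / (P * D)) / ((P * Q - x) / (P * Q))"
    using nz P Q D by (simp add: divide_simps)
  also have "D / (Q * (P - 1)) = 1 - 1 / (Q * (P - 1))"
    using nz Q D_def by (simp add: divide_simps) (simp add: algebra_simps)
  also have "(P * D + x) / (P * D) = 1 + x / (P * D)" using P D by (simp add: divide_simps)
  also have "(P * Q - x) / (P * Q) = 1 - x / (P * Q)" using P Q by (simp add: divide_simps)
  finally show ?thesis .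
qed

lemma euler_denominator_ge:
  assumes "2 \<le> p" and "1 \<le> r"
  shows "real p / 2 \<le> real p ^ (r + 1) - real p ^ r - 1"
proof -
  have p: "2 \<le> real p" using assms by simp
  have "real p \<le> real p ^ r" using assms by (intro self_le_power) auto
  hence "real p * (real p - 1) \<le> real p ^ r * (real p - 1)"
    using p by (intro mult_right_mono) auto
  hence "real p * real p - real p \<le> real p * real p ^ r - real p ^ r"
    by (simp add: algebra_simps)
  moreover have "2 * real p \<le> real p * real p"
    using p by (intro mult_right_mono) auto
  moreover have "real p ^ (r + 1) = real p * real p ^ r" by simp
  ultimately show ?thesis using p by linarith
qed

lemma B_euler_factor_eq:
  assumes chi: "dirichlet_character q chi" and r: "1 \<le> r" and p: "2 \<le> p"
  shows "B_euler_factor chi r p =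
           of_real (A_euler_factor r p) * P_euler_factor chi r p *
           inverse (1 - chi p / of_nat p ^ (r + 1)) *
           inverse (1 - chi p / of_nat p ^ (r + 2)) * inverse (1 - chi p / of_nat p ^ (r + 3))"
proof -
  define P :: complex where "P = of_nat p"
  define Q where "Q = P ^ r"
  define D where "D = P * Q - Q - 1"
  define x where "x = chi p"
  have x: "norm x \<le> 1" unfolding x_def by (rule norm_dirichlet_character_le_1[OF chi])
  have large: "1 < norm (P ^ (r + j))" if "1 \<le> j" for j
    unfolding P_def using p that by (simp add: norm_power less_1_mult one_less_power)
  have PQ: "P ^ (r + 1) = P * Q" by (simp add: Q_def)
  have "D = of_real (real p ^ (r + 1) - real p ^ r - 1)" by (simp add: D_def Q_def P_def)
  hence D: "D \<noteq> 0" using euler_denominator_ge[OF p r] p by (auto simp del: of_real_diff)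
  have "P * Q \<noteq> x" using large[of 1, unfolded PQ] x by auto
  hence B: "B_euler_factor chi r p = of_real (A_euler_factor r p) * (1 + x / (P * D)) / (1 - x / P ^ (r + 1))"
    unfolding B_euler_factor_def A_euler_factor_def PQ P_def[symmetric] x_def[symmetric]
    using euler_factor_identity[OF _ _ _ _ D D_def] p by (simp add: P_def Q_def)
  have cancel: "A * a / u = A * (a * b * c) * inverse u * inverse b * inverse c"
    if "b \<noteq> 0" "c \<noteq> 0" for A a b c u :: complex
    using that by (simp add: field_simps)
  have Peq: "P_euler_factor chi r p = (1 + x / (P * D)) * (1 - x / P ^ (r + 2)) * (1 - x / P ^ (r + 3))"
    by (simp add: P_euler_factor_def P_def D_def Q_def x_def)
  have "1 - x / P ^ (r + 2) \<noteq> 0" "1 - x / P ^ (r + 3) \<noteq> 0"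
    using large[of 2] large[of 3] x by auto
  then show ?thesis unfolding B Peq unfolding P_def x_def by (rule cancel)
qed

lemma abs_A_euler_factor_minus_1_le:
  assumes "1 \<le> r" and "2 \<le> p"
  shows "\<bar>A_euler_factor r p - 1\<bar> \<le> 2 / real p ^ 2"
proof -
  have p: "2 \<le> real p" using assms by simp
  have "real p \<le> real p ^ r" using assms by (intro self_le_power) auto
  hence "real p * (real p / 2) \<le> real p ^ r * (real p - 1)"
    using p by (intro mult_mono) auto
  hence "1 / (real p ^ r * (real p - 1)) \<le> 1 / (real p * (real p / 2))"
    using p by (intro divide_left_mono mult_pos_pos) auto
  thus ?thesis using p by (simp add: A_euler_factor_def power2_eq_square)
qed

lemma norm_triple_product_minus_1_le:
  fixes a b c :: complex
  assumes "norm a \<le> t" "norm b \<le> t" "norm c \<le> t" "t \<le> 1"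
  shows "norm ((1 + a) * (1 + b) * (1 + c) - 1) \<le> 7 * t"
proof -
  have t: "0 \<le> t" using assms(1) norm_ge_zero order_trans by blast
  have a: "norm (1 + a) \<le> 2" and b: "norm (1 + b) \<le> 2"
    using norm_triangle_ineq[of 1 a] norm_triangle_ineq[of 1 b] assms by simp_all
  have "norm (b * (1 + a)) \<le> t * 2"
    unfolding norm_mult using assms a t by (intro mult_mono) auto
  moreover have "norm ((1 + a) * (1 + b)) \<le> 2 * 2"
    unfolding norm_mult using a b by (intro mult_mono) auto
  hence "norm (c * ((1 + a) * (1 + b))) \<le> t * (2 * 2)"
    unfolding norm_mult[of c] using assms t by (intro mult_mono) auto
  moreover have "norm (a + b * (1 + a) + c * ((1 + a) * (1 + b)))
      \<le> norm a + norm (b * (1 + a)) + norm (c * ((1 + a) * (1 + b)))"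
    by (rule order_trans[OF norm_triangle_ineq add_right_mono[OF norm_triangle_ineq]])
  moreover have "(1 + a) * (1 + b) * (1 + c) - 1 = a + b * (1 + a) + c * ((1 + a) * (1 + b))"
    by (simp add: algebra_simps)
  ultimately show ?thesis using assms(1) by simp
qed

lemma P_euler_factor_bound:
  assumes chi: "dirichlet_character q chi" and r: "1 \<le> r" and p: "2 \<le> p"
  shows "norm (P_euler_factor chi r p - 1) \<le> 14 / real p ^ 2" and "P_euler_factor chi r p \<noteq> 0"
proof -
  define a where "a = chi p / (of_nat p * (of_nat p ^ (r + 1) - of_nat p ^ r - 1))"
  define b where "b = - (chi p / of_nat p ^ (r + 2))"
  define c where "c = - (chi p / of_nat p ^ (r + 3))"
  define t where "t = 2 / real p ^ 2"
  have x: "norm (chi p) \<le> 1" by (rule norm_dirichlet_character_le_1[OF chi])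
  have P: "P_euler_factor chi r p = (1 + a) * (1 + b) * (1 + c)"
    unfolding P_euler_factor_def a_def b_def c_def by simp
  have "4 \<le> real p ^ 2" using p power_mono[of 2 "real p" 2] by simp
  hence t: "t \<le> 1/2" unfolding t_def by (simp add: divide_simps)
  have "norm a \<le> 1 / (real p * (real p / 2))"
  proof -
    define D where "D = real p ^ (r + 1) - real p ^ r - 1"
    have D: "real p / 2 \<le> D" unfolding D_def by (rule euler_denominator_ge[OF p r])
    have "(of_nat p ^ (r + 1) - of_nat p ^ r - 1 :: complex) = of_real D" by (simp add: D_def)
    hence "norm a = norm (chi p) / (real p * D)"
      unfolding a_def using D p by (simp add: norm_divide norm_mult)
    also have "\<dots> \<le> 1 / (real p * (real p / 2))"
      using x D p by (intro frac_le mult_left_mono mult_pos_pos) auto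
    finally show ?thesis .
  qed
  hence a: "norm a \<le> t" unfolding t_def by (simp add: power2_eq_square)
  have "norm (chi p / of_nat p ^ (r + j)) \<le> t" if "2 \<le> j" for j
  proof -
    have "real p ^ 2 \<le> real p ^ (r + j)" using p that by (intro power_increasing) auto
    hence "norm (chi p / of_nat p ^ (r + j)) \<le> 1 / real p ^ 2"
      using x p by (simp add: norm_divide norm_power frac_le)
    moreover have "1 / real p ^ 2 \<le> 2 / real p ^ 2" by (simp add: divide_right_mono)
    ultimately show ?thesis unfolding t_def by linarith
  qed
  note small = this
  have b: "norm b \<le> t" using small[of 2] unfolding b_def by (simp only: norm_minus_cancel)
  have c: "norm c \<le> t" using small[of 3] unfolding c_def by (simp only: norm_minus_cancel)
  have "norm (P_euler_factor chi r p - 1) \<le> 7 * t"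
    unfolding P using a b c t by (intro norm_triple_product_minus_1_le) auto
  thus "norm (P_euler_factor chi r p - 1) \<le> 14 / real p ^ 2" unfolding t_def by simp
  have "1 + a \<noteq> 0" "1 + b \<noteq> 0" "1 + c \<noteq> 0"
    using a b c t by (auto simp: add_eq_0_iff)
  thus "P_euler_factor chi r p \<noteq> 0" unfolding P by simp
qed

lemma convergent_prod_P_euler_factor:
  assumes "dirichlet_character q chi" and "1 \<le> r"
  shows "convergent_prod (\<lambda>k. P_euler_factor chi r (prime_enum k))"
  using P_euler_factor_bound(1)[OF assms prime_ge_2_nat]
  by (intro convergent_prod_over_primes[where C = 14])

lemma A_euler_factor_has_prod:
  assumes "1 \<le> r"
  shows "(\<lambda>k. A_euler_factor r (prime_enum k)) has_prod A_const r"
proof -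
  have "convergent_prod (\<lambda>k. A_euler_factor r (prime_enum k))"
    using abs_A_euler_factor_minus_1_le[OF assms prime_ge_2_nat]
    by (intro convergent_prod_over_primes[where C = 2]) simp
  thus ?thesis unfolding A_const_eq_prodinf by (simp add: convergent_prod_has_prod_iff)
qed

theorem B_chi_eq_prodinf_P_mult_Lambda:
  assumes chi: "dirichlet_character q chi" and r: "1 \<le> r"
  shows "B_chi chi r = (\<Prod>k. P_euler_factor chi r (prime_enum k)) * Lambda_const chi r"
proof -
  let ?p = "prime_enum"
  let ?L = "\<lambda>j. dirichlet_L (real (r + j)) chi"
  let ?e = "\<lambda>j k. inverse (1 - chi (?p k) / of_nat (?p k) ^ (r + j))"
  have e: "?e j has_prod ?L j" if "1 \<le> j" for j
    using dirichlet_L_euler_product[OF chi, of "r + j"] that r by simp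
  note e1 = e[of 1] and e2 = e[of 2] and e3 = e[of 3]
  have "(\<lambda>k. complex_of_real (A_euler_factor r (?p k))) has_prod of_real (A_const r)"
    using A_euler_factor_has_prod[OF r] by simp
  moreover have "(\<lambda>k. P_euler_factor chi r (?p k)) has_prod (\<Prod>k. P_euler_factor chi r (?p k))"
    using convergent_prod_P_euler_factor[OF chi r] by (simp add: convergent_prod_has_prod_iff)
  ultimately have prod: "(\<lambda>k. of_real (A_euler_factor r (?p k)) * P_euler_factor chi r (?p k)
        * ?e 1 k * ?e 2 k * ?e 3 k)
      has_prod (of_real (A_const r) * (\<Prod>k. P_euler_factor chi r (?p k)) * ?L 1 * ?L 2 * ?L 3)"
    by (intro has_prod_mult e1 e2 e3) simp_all
  have B: "(\<lambda>k. B_euler_factor chi r (?p k)) = (\<lambda>k. of_real (A_euler_factor r (?p k))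
      * P_euler_factor chi r (?p k) * ?e 1 k * ?e 2 k * ?e 3 k)"
    by (intro ext B_euler_factor_eq[OF chi r] two_le_prime_enum)
  have "B_chi chi r = of_real (A_const r) * (\<Prod>k. P_euler_factor chi r (?p k)) * ?L 1 * ?L 2 * ?L 3"
    using prod unfolding B_chi_eq_prodinf B by (rule has_prod_unique[symmetric])
  thus ?thesis unfolding Lambda_const_def by (simp add: ac_simps)
qed

lemma E_tail_eq_prodinf: "E_tail chi r n = (\<Prod>i. P_euler_factor chi r (prime_enum (i + n)))"
  unfolding E_tail_def P_factor_eq_P_euler_factor by (simp add: nth_prime_Suc[symmetric] ac_simps)

theorem B_chi_eq_E_tail_Lambda_prod:
  assumes "dirichlet_character q chi" and "1 \<le> r"
  shows "B_chi chi r = E_tail chi r n * Lambda_const chi r * (\<Prod>k=1..n. P_factor chi r k)"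
proof -
  let ?f = "\<lambda>k. P_euler_factor chi r (prime_enum k)"
  have "?f k \<noteq> 0" for k
    using P_euler_factor_bound(2)[OF assms two_le_prime_enum] .
  hence "(\<Prod>k. ?f k) = (\<Prod>i. ?f (i + n)) * (\<Prod>i<n. ?f i)"
    using convergent_prod_P_euler_factor[OF assms] by (intro prodinf_split_initial_segment)
  moreover have "(\<Prod>k=1..n. P_factor chi r k) = (\<Prod>i<n. ?f i)"
    unfolding P_factor_eq_P_euler_factor by (simp add: prod.atLeast1_atMost_eq nth_prime_Suc)
  ultimately show ?thesis
    using B_chi_eq_prodinf_P_mult_Lambda[OF assms] by (simp add: E_tail_eq_prodinf ac_simps)
qed

section \<open>The tail estimate\<close>

lemma norm_prod_one_plus_le_exp:
  fixes a :: "nat \<Rightarrow> complex"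
  assumes "\<And>i. norm (a i) \<le> b i"
  shows "norm (\<Prod>i\<le>N. 1 + a i) \<le> exp (\<Sum>i\<le>N. b i)"
proof -
  have "norm (\<Prod>i\<le>N. 1 + a i) = (\<Prod>i\<le>N. norm (1 + a i))" by (simp add: prod_norm)
  also have "\<dots> \<le> (\<Prod>i\<le>N. exp (b i))"
  proof (rule prod_mono)
    fix i
    have "norm (1 + a i) \<le> 1 + b i" using norm_triangle_ineq[of 1 "a i"] assms[of i] by simp
    also have "\<dots> \<le> exp (b i)" by (rule exp_ge_add_one_self)
    finally show "0 \<le> norm (1 + a i) \<and> norm (1 + a i) \<le> exp (b i)" by simp
  qed
  also have "\<dots> = exp (\<Sum>i\<le>N. b i)" by (simp add: exp_sum)
  finally show ?thesis .
qed

lemma one_minus_sum_le_norm_prod_one_plus: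
  fixes a :: "nat \<Rightarrow> complex"
  assumes ab: "\<And>i. norm (a i) \<le> b i" and b1: "\<And>i. b i \<le> 1"
  shows "1 - (\<Sum>i\<le>N. b i) \<le> norm (\<Prod>i\<le>N. 1 + a i)"
proof (induction N)
  case 0
  show ?case using norm_triangle_ineq2[of 1 "- a 0"] ab[of 0] by (simp add: norm_minus_commute)
next
  case (Suc N)
  let ?s = "\<Sum>i\<le>N. b i"
  have b0: "0 \<le> b i" for i using ab[of i] norm_ge_zero order_trans by blast
  have "1 - b (Suc N) \<le> norm (1 + a (Suc N))"
    using norm_triangle_ineq2[of 1 "- a (Suc N)"] ab[of "Suc N"] by (simp add: norm_minus_commute)
  moreover have "norm (\<Prod>i\<le>Suc N. 1 + a i) = norm (\<Prod>i\<le>N. 1 + a i) * norm (1 + a (Suc N))"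
    by (simp add: atMost_Suc norm_mult mult.commute)
  moreover have "1 - (?s + b (Suc N)) \<le> (1 - ?s) * (1 - b (Suc N))"
    using b0[of "Suc N"] sum_nonneg[of "{..N}" b] b0 by (simp add: algebra_simps)
  ultimately show ?case
    using Suc.IH b1[of "Suc N"] b0[of "Suc N"] mult_mono[of "1 - ?s" "norm (\<Prod>i\<le>N. 1 + a i)"
        "1 - b (Suc N)" "norm (1 + a (Suc N))"]
    by (cases "0 \<le> 1 - ?s") (auto simp: atMost_Suc intro: order_trans[OF _ mult_nonneg_nonneg])
qed

lemma norm_prodinf_one_plus_bounds:
  fixes a :: "nat \<Rightarrow> complex"
  assumes conv: "convergent_prod (\<lambda>i. 1 + a i)"
    and ab: "\<And>i. norm (a i) \<le> b i" and b1: "\<And>i. b i \<le> 1"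
    and S: "\<And>N. (\<Sum>i\<le>N. b i) \<le> S"
  shows "1 - S \<le> norm (\<Prod>i. 1 + a i)" and "norm (\<Prod>i. 1 + a i) \<le> exp S"
proof -
  have lim: "(\<lambda>N. norm (\<Prod>i\<le>N. 1 + a i)) \<longlonglongrightarrow> norm (\<Prod>i. 1 + a i)"
    by (intro tendsto_norm convergent_prod_LIMSEQ conv)
  show "1 - S \<le> norm (\<Prod>i. 1 + a i)"
    using one_minus_sum_le_norm_prod_one_plus[OF ab b1] S
    by (intro LIMSEQ_le_const[OF lim]) (meson diff_left_mono order_trans)
  show "norm (\<Prod>i. 1 + a i) \<le> exp S"
    using norm_prod_one_plus_le_exp[OF ab] S
    by (intro LIMSEQ_le_const2[OF lim]) (meson exp_le_cancel_iff order_trans)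
qed

definition tail_estimate_applies :: "nat \<Rightarrow> nat \<Rightarrow> bool" where
  "tail_estimate_applies r p \<longleftrightarrow> (r = 1 \<and> 5 \<le> p) \<or> (r = 2 \<and> 3 \<le> p)"

lemma tail_estimate_applies_mono:
  "tail_estimate_applies r p \<Longrightarrow> p \<le> p' \<Longrightarrow> tail_estimate_applies r p'"
  unfolding tail_estimate_applies_def by auto

lemma norm_product_minus_1_le_expansion:
  fixes x :: complex and u v w :: real
  assumes x: "norm x \<le> 1" and "0 \<le> u" "0 \<le> v" "0 \<le> w"
  shows "norm ((1 + x * of_real u) * (1 - x * of_real v) * (1 - x * of_real w) - 1)
           \<le> \<bar>u - v - w\<bar> + u * v + u * w + v * w + u * v * w"
proof -
  have bound: "norm (y * of_real t) \<le> \<bar>t\<bar>" if "norm y \<le> 1" for y :: complex and t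
    unfolding norm_mult norm_of_real by (intro mult_left_le_one_le) (use that in auto)
  have "(1 + x * of_real u) * (1 - x * of_real v) * (1 - x * of_real w) - 1
     = x * of_real (u - v - w) + x^2 * of_real (v * w - u * v - u * w) + x^3 * of_real (u * v * w)"
    by (simp add: algebra_simps power2_eq_square power3_eq_cube)
  also have "norm \<dots> \<le> norm (x * of_real (u - v - w)) + norm (x^2 * of_real (v * w - u * v - u * w))
      + norm (x^3 * of_real (u * v * w))"
    by (rule order_trans[OF norm_triangle_ineq add_right_mono[OF norm_triangle_ineq]])
  also have "\<dots> \<le> \<bar>u - v - w\<bar> + \<bar>v * w - u * v - u * w\<bar> + \<bar>u * v * w\<bar>"
    using x by (intro add_mono bound) (simp_all add: norm_power power_le_one)
  also have "\<dots> \<le> \<bar>u - v - w\<bar> + u * v + u * w + v * w + u * v * w"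
    using assms by (simp add: abs_le_iff)
  finally show ?thesis .
qed

text \<open>With K = p^3 Q, the leading term u - v - w equals (Q + p + 1)/(KD) and each product term
  is at most 1/(KD), except vw = v/K.\<close>
lemma P_error_terms_le:
  fixes p Q D :: real
  assumes p: "2 \<le> p" and Q: "2 \<le> Q" and D_def: "D = p * Q - Q - 1" and D: "0 < D"
    and H: "(Q + p + 4) / D + 1 / (p * p * Q) \<le> 1"
  defines "u \<equiv> 1 / (p * D)" and "v \<equiv> 1 / (p * p * Q)" and "w \<equiv> 1 / (p * p * p * Q)"
  shows "\<bar>u - v - w\<bar> + u * v + u * w + v * w + u * v * w \<le> w"
proof -
  define K where "K = p * p * p * Q"
  have K: "0 < K" unfolding K_def using p Q by simp
  have "u - v - w = (p * p * Q - p * D - D) / (K * D)"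
    unfolding u_def v_def w_def K_def using p Q D by (simp add: field_simps)
  also have "p * p * Q - p * D - D = Q + p + 1" unfolding D_def by (simp add: algebra_simps)
  finally have "\<bar>u - v - w\<bar> = (Q + p + 1) / (K * D)" using K D Q p by simp
  moreover have "u * v = 1 / (K * D)" unfolding u_def v_def K_def by simp
  moreover have "u * w = 1 / (K * D) * (1 / p)" unfolding u_def w_def K_def by simp
  moreover have "1 / (K * D) * (1 / p) \<le> 1 / (K * D)"
    using K D p by (intro mult_right_le_one_le) auto
  moreover have "v * w = v / K" unfolding v_def w_def K_def by simp
  moreover have "u * v * w = 1 / (K * D) * w" unfolding u_def v_def w_def K_def by simp
  moreover have "1 \<le> K" unfolding K_def using p Q by (intro mult_ge1_I) auto
  hence "1 / (K * D) * w \<le> 1 / (K * D)"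
    using K D unfolding w_def K_def[symmetric] by (intro mult_right_le_one_le) auto
  ultimately have "\<bar>u - v - w\<bar> + u * v + u * w + v * w + u * v * w
      \<le> (Q + p + 1) / (K * D) + 1 / (K * D) + 1 / (K * D) + v / K + 1 / (K * D)"
    by linarith
  also have "\<dots> = ((Q + p + 4) / D + v) / K" using K D by (simp add: field_simps)
  also have "\<dots> \<le> 1 / K" using H K unfolding v_def by (intro divide_right_mono) auto
  finally show ?thesis unfolding w_def K_def .
qed

lemma tail_estimate_inequality_r1:
  fixes p :: real
  assumes "5 \<le> p"
  shows "(p + p + 4) / (p * p - p - 1) + 1 / (p * p * p) \<le> 1"
proof -
  have pp: "5 * p \<le> p * p" using assms by (intro mult_right_mono) auto
  hence D: "0 < p * p - p - 1" using assms by linarith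
  have "124/125 * (p * p - p - 1) = 124/125 * (p * p) - 124/125 * p - 124/125" by simp
  hence "(p + p + 4) / (p * p - p - 1) \<le> 124/125"
    unfolding pos_divide_le_eq[OF D] using pp assms by linarith
  moreover have "25 \<le> p * p" using pp assms by linarith
  hence "25 * 5 \<le> p * p * p" using assms by (intro mult_mono) auto
  hence "1 / (p * p * p) \<le> 1/125" by (intro divide_left_mono) auto
  ultimately show ?thesis by linarith
qed

lemma tail_estimate_inequality_r2:
  fixes p :: real
  assumes "3 \<le> p"
  shows "(p * p + p + 4) / (p * (p * p) - p * p - 1) + 1 / (p * p * (p * p)) \<le> 1"
proof -
  have pp: "3 * p \<le> p * p" using assms by (intro mult_right_mono) auto
  have ppp: "3 * (p * p) \<le> p * (p * p)" using assms by (intro mult_right_mono) auto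
  have D: "0 < p * (p * p) - p * p - 1" using pp ppp assms by linarith
  have "80/81 * (p * (p * p) - p * p - 1) = 80/81 * (p * (p * p)) - 80/81 * (p * p) - 80/81" by simp
  hence "(p * p + p + 4) / (p * (p * p) - p * p - 1) \<le> 80/81"
    unfolding pos_divide_le_eq[OF D] using pp ppp assms by linarith
  moreover have "9 \<le> p * p" using pp assms by linarith
  hence "9 * 9 \<le> p * p * (p * p)" by (intro mult_mono) auto
  hence "1 / (p * p * (p * p)) \<le> 1/81" by (intro divide_left_mono) auto
  ultimately show ?thesis by linarith
qed

lemma norm_P_euler_factor_minus_1_le:
  assumes chi: "dirichlet_character q chi" and applies: "tail_estimate_applies r p"
  shows "norm (P_euler_factor chi r p - 1) \<le> 1 / real p ^ (r + 3)"
proof -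
  have p: "2 \<le> p" and r: "1 \<le> r" using applies unfolding tail_estimate_applies_def by auto
  define Q where "Q = real p ^ r"
  define D where "D = real p * Q - Q - 1"
  define u where "u = 1 / (real p * D)"
  define v where "v = 1 / (real p * real p * Q)"
  define w where "w = 1 / (real p * real p * real p * Q)"
  have "real p / 2 \<le> D" unfolding D_def Q_def using euler_denominator_ge[OF p r] by simp
  hence D: "0 < D" using p by simp
  have "real p \<le> Q" unfolding Q_def using p r by (intro self_le_power) auto
  hence Q: "2 \<le> Q" using p by simp
  have H: "(Q + real p + 4) / D + 1 / (real p * real p * Q) \<le> 1"
    using applies tail_estimate_inequality_r1[of "real p"] tail_estimate_inequality_r2[of "real p"]
    unfolding tail_estimate_applies_def D_def Q_def
    by (auto simp: power2_eq_square add.commute)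
  have "(of_nat p * (of_nat p ^ (r + 1) - of_nat p ^ r - 1) :: complex) = of_real (real p * D)"
    and "(of_nat p ^ (r + 2) :: complex) = of_real (real p * real p * Q)"
    and "(of_nat p ^ (r + 3) :: complex) = of_real (real p * real p * real p * Q)"
    unfolding D_def Q_def by (simp_all add: eval_nat_numeral)
  moreover have "y / complex_of_real X = y * of_real (1 / X)" for y X by (simp add: divide_inverse)
  ultimately have "P_euler_factor chi r p =
      (1 + chi p * of_real u) * (1 - chi p * of_real v) * (1 - chi p * of_real w)"
    unfolding P_euler_factor_def u_def v_def w_def by presburger
  also have "norm (\<dots> - 1) \<le> \<bar>u - v - w\<bar> + u * v + u * w + v * w + u * v * w"
    using D Q p unfolding u_def v_def w_def
    by (intro norm_product_minus_1_le_expansion norm_dirichlet_character_le_1[OF chi]) auto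
  also have "\<dots> \<le> w"
    unfolding u_def v_def w_def using P_error_terms_le[OF _ Q D_def D H] p by simp
  also have "w = 1 / real p ^ (r + 3)" unfolding w_def Q_def by (simp add: eval_nat_numeral)
  finally show ?thesis .
qed

lemma inverse_le_telescoping_difference:
  fixes p A B :: real
  assumes p: "0 < p" and A: "0 < A" and B: "0 < B" and H: "p * A \<le> (p - 2) * B"
  shows "1 / (p * A) \<le> 1 / (2 * A) - 1 / (2 * B)"
proof -
  have "1 / (2 * A) - 1 / (2 * B) - 1 / (p * A) = ((p - 2) * B - p * A) / (2 * p * A * B)"
    using p A B by (simp add: field_simps)
  also have "0 \<le> \<dots>" using p A B H by (intro divide_nonneg_pos) auto
  finally show ?thesis by simp
qed

lemma inverse_power_le_telescoping:
  assumes "tail_estimate_applies r p"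
  shows "1 / real p ^ (r + 3) \<le> 1 / (2 * real p ^ (r + 2)) - 1 / (2 * real (Suc p) ^ (r + 2))"
proof -
  let ?p = "real p"
  have p: "2 < ?p" using assms unfolding tail_estimate_applies_def by auto
  have "?p * ?p ^ (r + 2) \<le> (?p - 2) * (?p + 1) ^ (r + 2)"
  proof (cases "r = 1")
    case True
    hence p5: "5 \<le> ?p" using assms unfolding tail_estimate_applies_def by auto
    have "(?p - 2) * (?p + 1) ^ 3 - ?p * ?p ^ 3 = ?p * (?p * ?p) - 3 * (?p * ?p) - 5 * ?p - 2"
      by (simp add: algebra_simps power3_eq_cube)
    moreover have "5 * ?p \<le> ?p * ?p" "5 * (?p * ?p) \<le> ?p * (?p * ?p)"
      using p5 by (intro mult_right_mono; simp)+
    ultimately have "?p * ?p ^ 3 \<le> (?p - 2) * (?p + 1) ^ 3" using p5 by linarith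
    moreover have "r + 2 = 3" using True by simp
    ultimately show ?thesis by (simp only:)
  next
    case False
    hence r: "r = 2" and p3: "3 \<le> ?p" using assms unfolding tail_estimate_applies_def by auto
    have "(?p - 2) * (?p + 1) ^ 4 - ?p * ?p ^ 4
        = 2 * (?p * (?p * (?p * ?p))) - 2 * (?p * (?p * ?p)) - 8 * (?p * ?p) - 7 * ?p - 2"
      by (simp add: algebra_simps power4_eq_xxxx)
    moreover have "3 * ?p \<le> ?p * ?p" "3 * (?p * ?p) \<le> ?p * (?p * ?p)"
      "3 * (?p * (?p * ?p)) \<le> ?p * (?p * (?p * ?p))"
      using p3 by (intro mult_right_mono; simp)+
    ultimately have "?p * ?p ^ 4 \<le> (?p - 2) * (?p + 1) ^ 4" using p3 by linarith
    thus ?thesis using r by simp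
  qed
  hence "1 / (?p * ?p ^ (r + 2)) \<le> 1 / (2 * ?p ^ (r + 2)) - 1 / (2 * (?p + 1) ^ (r + 2))"
    using p by (intro inverse_le_telescoping_difference) auto
  thus ?thesis by (simp add: add.commute eval_nat_numeral)
qed

lemma sum_inverse_power_prime_enum_le:
  assumes "tail_estimate_applies r (prime_enum n)"
  shows "(\<Sum>i\<le>N. 1 / real (prime_enum (i + n)) ^ (r + 3)) \<le> 1 / (2 * real (prime_enum n) ^ (r + 2))"
proof -
  define G where "G i = 1 / (2 * real (prime_enum (i + n)) ^ (r + 2))" for i
  have "1 / real (prime_enum (i + n)) ^ (r + 3) \<le> G i - G (Suc i)" for i
  proof -
    have "tail_estimate_applies r (prime_enum (i + n))"
      using assms by (rule tail_estimate_applies_mono) simp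
    hence "1 / real (prime_enum (i + n)) ^ (r + 3)
        \<le> G i - 1 / (2 * real (Suc (prime_enum (i + n))) ^ (r + 2))"
      unfolding G_def by (rule inverse_power_le_telescoping)
    moreover have "prime_enum (i + n) < prime_enum (Suc i + n)" by simp
    hence "Suc (prime_enum (i + n)) \<le> prime_enum (Suc i + n)" by (rule Suc_leI)
    hence "G (Suc i) \<le> 1 / (2 * real (Suc (prime_enum (i + n))) ^ (r + 2))"
      unfolding G_def by (intro divide_left_mono mult_left_mono power_mono mult_pos_pos) auto
    ultimately show ?thesis by linarith
  qed
  hence "(\<Sum>i\<le>N. 1 / real (prime_enum (i + n)) ^ (r + 3)) \<le> (\<Sum>i\<le>N. G i - G (Suc i))"
    by (intro sum_mono)
  also have "\<dots> = G 0 - G (Suc N)" by (rule sum_telescope)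
  also have "\<dots> \<le> G 0" by (simp add: G_def)
  finally show ?thesis by (simp add: G_def)
qed

theorem E_tail_bounds:
  assumes chi: "dirichlet_character q chi" and applies: "tail_estimate_applies r (nth_prime (n + 1))"
  shows "1 - 1 / real (nth_prime (n + 1)) ^ (r + 2) \<le> norm (E_tail chi r n)"
    and "norm (E_tail chi r n) \<le> 1 + 1 / real (nth_prime (n + 1)) ^ (r + 2)"
proof -
  define p where "p = prime_enum n"
  have p_eq: "nth_prime (n + 1) = p" unfolding p_def by (simp add: nth_prime_Suc)
  have r: "1 \<le> r" using applies unfolding tail_estimate_applies_def by auto
  define S where "S = 1 / (2 * real p ^ (r + 2))"
  define a where "a i = P_euler_factor chi r (prime_enum (i + n)) - 1" for i
  define b where "b i = 1 / real (prime_enum (i + n)) ^ (r + 3)" for i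
  have E: "E_tail chi r n = (\<Prod>i. 1 + a i)" unfolding E_tail_eq_prodinf a_def by simp
  have "convergent_prod (\<lambda>i. 1 + a i)"
    using convergent_prod_P_euler_factor[OF chi r]
      convergent_prod_iff_shift[of "\<lambda>k. P_euler_factor chi r (prime_enum k)" n]
    unfolding a_def by simp
  moreover have "norm (a i) \<le> b i" for i
  proof -
    have "tail_estimate_applies r (prime_enum (i + n))"
      using applies unfolding p_eq p_def by (rule tail_estimate_applies_mono) simp
    thus ?thesis unfolding a_def b_def by (rule norm_P_euler_factor_minus_1_le[OF chi])
  qed
  moreover have "b i \<le> 1" for i
    unfolding b_def using two_le_prime_enum[of "i + n"] by (simp add: one_le_power)
  moreover have "(\<Sum>i\<le>N. b i) \<le> S" for N
    unfolding b_def S_def p_def using applies unfolding p_eq p_def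
    by (rule sum_inverse_power_prime_enum_le)
  note bounds = norm_prodinf_one_plus_bounds[OF calculation this, folded E]
  have "1 \<le> real p ^ (r + 2)" unfolding p_def using two_le_prime_enum[of n] by (intro one_le_power) simp
  hence "0 \<le> S" "S \<le> 1/2" unfolding S_def by simp_all
  hence "exp S \<le> 1 + 2 * S" by (rule real_exp_bound_lemma)
  moreover have "2 * S = 1 / real p ^ (r + 2)" unfolding S_def by simp
  ultimately show "1 - 1 / real (nth_prime (n + 1)) ^ (r + 2) \<le> norm (E_tail chi r n)"
    and "norm (E_tail chi r n) \<le> 1 + 1 / real (nth_prime (n + 1)) ^ (r + 2)"
    using bounds \<open>0 \<le> S\<close> unfolding p_eq by linarith+
qed

theorem theorem5p1:
  fixes chi :: "nat \<Rightarrow> complex" and q r n :: nat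
  assumes "dirichlet_character q chi" and "r \<ge> 1" and "n \<ge> 1"
  shows "B_chi chi r = E_tail chi r n * Lambda_const chi r * (\<Prod>k=1..n. P_factor chi r k)
    \<and> ((r = 1 \<and> nth_prime (n + 1) \<ge> 5) \<or> (r = 2 \<and> nth_prime (n + 1) \<ge> 3) \<longrightarrow>
         1 - 1 / real (nth_prime (n + 1)) ^ (r + 2) \<le> cmod (E_tail chi r n) \<and>
         cmod (E_tail chi r n) \<le> 1 + 1 / real (nth_prime (n + 1)) ^ (r + 2))"
  using B_chi_eq_E_tail_Lambda_prod[OF assms(1,2)]
    E_tail_bounds[OF assms(1), unfolded tail_estimate_applies_def]
  by blast

end
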